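(* Let $S$ be a connected surface without boundary, $K\subset S$ a compact connected set, and $U$ a residual domain of $K$. Let $\alpha:\,]0,1]\to U$ be a path such that $\lim_{t\to0}\alpha(t)=p\in K$ in $S$. Then there exists an ideal boundary point $b$ of $U$ which is relatively compact in $S$ such that $\lim_{t\to0}\alpha(t)=b$ in the ideal completion $B(U)$.
   Context: A residual domain of $K$ is a connected component of $S-K$. For a surface $X$, an ideal boundary component of $X$ is a decreasing sequence $V_1\supset V_2\supset\cdots$ of nonempty subsets of $X$ such that each $V_n$ is open in $X$ and connected, $cl_XV_n$ is not compact, $fr_XV_n$ is compact, and for every compact $C\subset X$ there is $n_0$ with $C\cap V_n=\emptyset$ for $n\ge n_0$; two such sequences $(V_n)$, $(V'_n)$ are equivalent if for every $n$ there is $m$ with $V_m\subset V'_n$, and vice versa. The ideal boundary $b(X)$ is the set of equivalence classes and $B(X)=X\sqcup b(X)$ is the ideal completion, with topology having as basis the sets $A\cup A'$, where $A\subset X$ is open connected with $fr_XA$ compact and $A'$ is the set of ideal boundary points represented by some $(V_n)$ with $V_n\subset A$ for all large $n$. An ideal boundary point of $U$ represented by $(V_n)$ is relatively compact in $S$ if some $V_n$ has compact closure in $S$. *)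

theory Defs
  imports "HOL-Analysis.Analysis"
begin

definition surface :: "'a topology \<Rightarrow> bool" where
  "surface S \<longleftrightarrow> Hausdorff_space S \<and> second_countable S \<and>
     (\<forall>x\<in>topspace S. \<exists>W. openin S W \<and> x \<in> W \<and>
        (\<exists>T::(real^2) set. open T \<and> subtopology S W homeomorphic_space top_of_set T))"

definition residual_domain :: "'a topology \<Rightarrow> 'a set \<Rightarrow> 'a set \<Rightarrow> bool" where
  "residual_domain S K U \<longleftrightarrow> U \<in> connected_components_of (subtopology S (topspace S - K))"

definition ideal_bdry_comp :: "'a topology \<Rightarrow> (nat \<Rightarrow> 'a set) \<Rightarrow> bool" where
  "ideal_bdry_comp X V \<longleftrightarrow>
     decseq V \<and>
     (\<forall>n. V n \<noteq> {} \<and> openin X (V n) \<and> connectedin X (V n) \<and>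
          \<not> compactin X (X closure_of (V n)) \<and> compactin X (X frontier_of (V n))) \<and>
     (\<forall>C. compactin X C \<longrightarrow> (\<exists>n0. \<forall>n\<ge>n0. C \<inter> V n = {}))"

definition ibc_equiv :: "(nat \<Rightarrow> 'a set) \<Rightarrow> (nat \<Rightarrow> 'a set) \<Rightarrow> bool" where
  "ibc_equiv V W \<longleftrightarrow> (\<forall>n. \<exists>m. V m \<subseteq> W n) \<and> (\<forall>n. \<exists>m. W m \<subseteq> V n)"

definition ideal_boundary :: "'a topology \<Rightarrow> (nat \<Rightarrow> 'a set) set set" where
  "ideal_boundary X = {{W. ideal_bdry_comp X W \<and> ibc_equiv V W} | V. ideal_bdry_comp X V}"

definition ib_points_in :: "'a topology \<Rightarrow> 'a set \<Rightarrow> (nat \<Rightarrow> 'a set) set set" where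
  "ib_points_in X A = {b \<in> ideal_boundary X. \<exists>V\<in>b. \<exists>n0. \<forall>n\<ge>n0. V n \<subseteq> A}"

definition ideal_completion :: "'a topology \<Rightarrow> ('a + (nat \<Rightarrow> 'a set) set) topology" where
  "ideal_completion X = topology_generated_by
     {Inl ` A \<union> Inr ` ib_points_in X A | A.
        openin X A \<and> connectedin X A \<and> compactin X (X frontier_of A)}"

definition rel_compact_ibp :: "'a topology \<Rightarrow> 'a set \<Rightarrow> (nat \<Rightarrow> 'a set) set \<Rightarrow> bool" where
  "rel_compact_ibp S U b \<longleftrightarrow> (\<exists>V\<in>b. \<exists>n. compactin S (S closure_of (V n)))"

end

(* Choose open neighbourhoods N_0, N_1, ... of K, decreasing, with compact closures, such that
   every compact set disjoint from K misses N_n for large n (second countability), and let V_n be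
   the component of U \<inter> N_n containing a tail of the path. The V_n decrease; the frontier of V_n
   in U lies in U \<inter> fr N_n, which is compact because the closure of U adds only points of K; the
   closure of V_n in U is not compact because the path tends to p \<notin> U. So (V_n) is an ideal
   boundary component, V_0 has compact closure in S, and the path converges to its class in B(U)
   since every basic neighbourhood of that class contains some V_m. *)

theory Submission
  imports Defs
begin

lemma locally_connected_space_euclidean:
  "locally_connected_space (euclidean :: 'a::real_normed_vector topology)"
  unfolding locally_connected_space
proof (intro allI impI)
  fix V and x :: 'a
  assume "openin euclidean V \<and> x \<in> V"
  then obtain e where "e > 0" "ball x e \<subseteq> V"
    by (auto elim: openE)
  then show "\<exists>U. openin euclidean U \<and> connectedin euclidean U \<and> x \<in> U \<and> U \<subseteq> V"
    by (intro exI[of _ "ball x e"]) auto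
qed

lemma surface_chart:
  assumes "surface S" "x \<in> topspace S"
  obtains W and T :: "(real^2) set"
  where "openin S W" "x \<in> W" "open T" "subtopology S W homeomorphic_space top_of_set T"
  using assms unfolding surface_def by blast

lemma surface_imp_locally_connected_space:
  assumes "surface S"
  shows "locally_connected_space S"
  unfolding locally_connected_space
proof (intro allI impI)
  fix V x assume V: "openin S V \<and> x \<in> V"
  then have "x \<in> topspace S"
    using openin_subset by blast
  then obtain W and T :: "(real^2) set" where W: "openin S W" "x \<in> W" "open T"
    and hom: "subtopology S W homeomorphic_space top_of_set T"
    by (rule surface_chart[OF assms])
  have "locally_connected_space (top_of_set T)"
    using locally_connected_space_open_subset[OF locally_connected_space_euclidean] \<open>open T\<close> by simp
  then have "locally_connected_space (subtopology S W)"
    using homeomorphic_locally_connected_space[OF hom] by blast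
  moreover have "openin (subtopology S W) (V \<inter> W)"
    using V W(1) by (simp add: openin_open_subtopology openin_Int)
  ultimately obtain C where C: "openin (subtopology S W) C" "connectedin (subtopology S W) C"
    "x \<in> C" "C \<subseteq> V \<inter> W"
    using V W(2) unfolding locally_connected_space by (meson IntI)
  show "\<exists>C. openin S C \<and> connectedin S C \<and> x \<in> C \<and> C \<subseteq> V"
  proof (intro exI conjI)
    show "openin S C"
      using openin_trans_full[OF C(1) W(1)] .
    show "connectedin S C"
      using C(2) by (simp add: connectedin_subtopology)
  qed (use C in auto)
qed

lemma surface_imp_locally_compact_space:
  assumes "surface S"
  shows "locally_compact_space S"
  unfolding locally_compact_space_def
proof
  fix x assume x: "x \<in> topspace S"
  then obtain W and T :: "(real^2) set" where W: "openin S W" "x \<in> W" "open T"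
    and hom: "subtopology S W homeomorphic_space top_of_set T"
    by (rule surface_chart[OF assms])
  have "locally_compact_space (top_of_set T)"
    using locally_compact_space_open_subset[of euclidean T] \<open>open T\<close>
    by (simp add: locally_compact_space_euclidean)
  then have "locally_compact_space (subtopology S W)"
    using homeomorphic_locally_compact_space[OF hom] by blast
  moreover have "x \<in> topspace (subtopology S W)"
    using x W(2) by simp
  ultimately obtain C L where C: "openin (subtopology S W) C" "compactin (subtopology S W) L"
    "x \<in> C" "C \<subseteq> L"
    unfolding locally_compact_space_def by blast
  show "\<exists>C L. openin S C \<and> compactin S L \<and> x \<in> C \<and> C \<subseteq> L"
  proof (intro exI conjI)
    show "openin S C"
      using openin_trans_full[OF C(1) W(1)] .
    show "compactin S L"
      using C(2) by (simp add: compactin_subtopology)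
  qed (use C in auto)
qed

lemma compactin_decreasing_open_neighbourhoods:
  assumes Hausdorff: "Hausdorff_space S" and "second_countable S" and "locally_compact_space S"
    and K: "compactin S K"
  obtains N :: "nat \<Rightarrow> 'a set"
  where "\<And>n. openin S (N n)" "\<And>n. K \<subseteq> N n" "\<And>n. compactin S (S closure_of N n)" "decseq N"
    "\<And>C. compactin S C \<Longrightarrow> C \<inter> K = {} \<Longrightarrow> \<exists>n. C \<inter> N n = {}"
proof -
  obtain N0 L where N0: "openin S N0" "K \<subseteq> N0" "N0 \<subseteq> L" and L: "compactin S L" "closedin S L"
    using \<open>locally_compact_space S\<close> K
    unfolding locally_compact_space_compact_closed_compact[OF disjI1[OF Hausdorff]] by blast
  obtain \<B> where \<B>: "countable \<B>" "\<forall>V\<in>\<B>. openin S V"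
    "\<forall>W x. openin S W \<and> x \<in> W \<longrightarrow> (\<exists>V\<in>\<B>. x \<in> V \<and> V \<subseteq> W)"
    using \<open>second_countable S\<close> unfolding second_countable_def by blast
  \<comment> \<open>\<open>{}\<close> only makes the family nonempty, as \<open>from_nat_into\<close> requires\<close>
  define \<F> where "\<F> = insert {} {V\<in>\<B>. S closure_of V \<inter> K = {}}"
  have \<F>_cover: "topspace S - K \<subseteq> \<Union>\<F>"
  proof
    fix x assume x: "x \<in> topspace S - K"
    then obtain O1 O2 where O: "openin S O1" "openin S O2" "x \<in> O1" "K \<subseteq> O2" "disjnt O1 O2"
      using Hausdorff_space_compact_separation[OF Hausdorff _ K, of "{x}"] by (auto simp: disjnt_def)
    then obtain V where V: "V \<in> \<B>" "x \<in> V" "V \<subseteq> O1"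
      using \<B>(3) by blast
    have "S closure_of V \<subseteq> topspace S - O2"
      using V(3) O openin_subset[OF O(1)] by (intro closure_of_minimal) (auto simp: disjnt_def)
    with V O(4) show "x \<in> \<Union>\<F>"
      unfolding \<F>_def by blast
  qed
  define b where "b = from_nat_into \<F>"
  have "range b = \<F>"
    unfolding b_def \<F>_def by (rule range_from_nat_into) (use \<B>(1) in auto)
  then have b_in: "b i \<in> \<F>" for i
    by blast
  have b_open: "openin S (b i)" and b_K: "S closure_of b i \<inter> K = {}" for i
    using b_in[of i] \<B>(2) unfolding \<F>_def by auto
  have b_cover: "topspace S - K \<subseteq> (\<Union>i. b i)"
    using \<F>_cover \<open>range b = \<F>\<close> by simp
  define N where "N n = N0 - (\<Union>i\<le>n. S closure_of b i)" for n
  have b_N: "b i \<inter> N n = {}" if "i \<le> n" for i n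
    using that closure_of_subset[OF openin_subset[OF b_open]] unfolding N_def by blast
  show thesis
  proof
    show "openin S (N n)" for n
      unfolding N_def by (intro openin_diff N0 closedin_Union) auto
    show "K \<subseteq> N n" for n
      using b_K N0(2) unfolding N_def by blast
    show "compactin S (S closure_of N n)" for n
    proof (rule closed_compactin[OF L(1)])
      show "S closure_of N n \<subseteq> L"
        using N0(3) L(2) unfolding N_def by (intro closure_of_minimal) auto
    qed auto
    show "decseq N"
      unfolding decseq_def N_def by auto
    fix C assume C: "compactin S C" "C \<inter> K = {}"
    then have "C \<subseteq> \<Union>(range b)"
      using compactin_subset_topspace b_cover by blast
    then obtain \<G> where "finite \<G>" "\<G> \<subseteq> range b" "C \<subseteq> \<Union>\<G>"
      using C(1) b_open unfolding compactin_def by (metis rangeE)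
    then obtain I where "finite I" "C \<subseteq> (\<Union>i\<in>I. b i)"
      by (metis finite_subset_image)
    moreover obtain n where "I \<subseteq> {..n}"
      using \<open>finite I\<close> finite_nat_iff_bounded_le by auto
    ultimately show "\<exists>n. C \<inter> N n = {}"
      using b_N by blast
  qed
qed

lemma closure_of_connected_components_of_complement:
  assumes "U \<in> connected_components_of (subtopology S (topspace S - K))"
  shows "S closure_of U \<subseteq> U \<union> K"
proof -
  have "(topspace S - K) \<inter> U = U"
    using connected_components_of_subset[OF assms] by auto
  then have "subtopology S (topspace S - K) closure_of U = (topspace S - K) \<inter> S closure_of U"
    using closure_of_subtopology[of S "topspace S - K" U] by simp
  moreover have "subtopology S (topspace S - K) closure_of U = U"
    using closedin_connected_components_of[OF assms] by (rule closure_of_closedin)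
  ultimately show ?thesis
    using closure_of_subset_topspace[of S U] by blast
qed

lemma frontier_of_connected_components_of_subset:
  assumes X: "locally_connected_space X" and G: "openin X G"
    and C: "C \<in> connected_components_of (subtopology X G)"
  shows "X frontier_of C \<subseteq> X frontier_of G"
proof
  fix x assume x: "x \<in> X frontier_of C"
  have "openin X C"
    using X G C locally_connected_space_open_connected_components by blast
  then have x_C: "x \<in> X closure_of C" "x \<notin> C"
    using x by (auto simp: frontier_of_def interior_of_openin)
  obtain T where T: "closedin X T" "C = T \<inter> G"
    using closedin_connected_components_of[OF C] unfolding closedin_subtopology by auto
  have "X closure_of C \<subseteq> T"
    using T by (simp add: closure_of_minimal)
  then have "x \<notin> G"
    using x_C T(2) by blast
  moreover have "x \<in> X closure_of G"
    using x_C(1) T(2) closure_of_mono[of C G] by blast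
  ultimately show "x \<in> X frontier_of G"
    using G by (simp add: frontier_of_def interior_of_openin)
qed

lemma eventually_at_0_within_Ioc:
  "eventually P (at (0::real) within {0<..1}) \<longleftrightarrow> (\<exists>\<tau>\<in>{0<..1}. \<forall>t\<in>{0<..\<tau>}. P t)"
proof
  assume "eventually P (at 0 within {0<..1})"
  then obtain d where "d > 0" "\<forall>t\<in>{0<..1}. t \<noteq> 0 \<and> dist t 0 < d \<longrightarrow> P t"
    unfolding eventually_at by blast
  then show "\<exists>\<tau>\<in>{0<..1}. \<forall>t\<in>{0<..\<tau>}. P t"
    by (intro bexI[of _ "min 1 (d/2)"]) (auto simp: dist_real_def)
next
  assume "\<exists>\<tau>\<in>{0<..1}. \<forall>t\<in>{0<..\<tau>}. P t"
  then obtain \<tau> where "\<tau> \<in> {0<..1}" "\<forall>t\<in>{0<..\<tau>}. P t"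
    by blast
  then show "eventually P (at 0 within {0<..1})"
    unfolding eventually_at by (intro exI[of _ \<tau>]) (auto simp: dist_real_def)
qed

lemma path_tail_components:
  fixes \<alpha> :: "real \<Rightarrow> 'a"
  assumes X: "locally_connected_space X"
    and \<alpha>: "continuous_map (top_of_set {0<..1}) X \<alpha>"
    and W: "\<And>n. openin X (W n)" "decseq W"
    and ev: "\<And>n. eventually (\<lambda>t. \<alpha> t \<in> W n) (at 0 within {0<..1})"
  obtains V where "decseq V" "\<And>n. openin X (V n)" "\<And>n. connectedin X (V n)" "\<And>n. V n \<subseteq> W n"
    "\<And>n. X frontier_of V n \<subseteq> X frontier_of W n"
    "\<And>n. eventually (\<lambda>t. \<alpha> t \<in> V n) (at 0 within {0<..1})"
proof -
  have "\<forall>n. \<exists>\<tau>. \<tau> \<in> {0<..1} \<and> (\<forall>t\<in>{0<..\<tau>}. \<alpha> t \<in> W n)"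
    using ev unfolding eventually_at_0_within_Ioc by blast
  then obtain \<tau> where \<tau>: "\<And>n. \<tau> n \<in> {0<..1}" "\<And>n t. t \<in> {0<..\<tau> n} \<Longrightarrow> \<alpha> t \<in> W n"
    by metis
  have \<tau>_W: "\<alpha> (\<tau> n) \<in> W n" for n
    using \<tau> by auto
  define V where "V n = connected_component_of_set (subtopology X (W n)) (\<alpha> (\<tau> n))" for n
  have "connectedin X (\<alpha> ` {0<..s})" if "s \<in> {0<..1}" for s
    using that by (intro connectedin_continuous_map_image[OF \<alpha>]) (auto simp: connectedin_subtopology)
  then have tail_V: "\<alpha> ` {0<..\<tau> n} \<subseteq> V n" for n
    unfolding V_def using \<tau> by (intro connected_component_of_maximal) (auto simp: connectedin_subtopology)
  have V_comp: "V n \<in> connected_components_of (subtopology X (W n))" for n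
    unfolding V_def using \<tau>_W openin_subset[OF W(1)]
    by (subst connected_component_in_connected_components_of) auto
  then have V_W: "V n \<subseteq> W n" for n
    using connected_components_of_subset by fastforce
  have V_conn: "connectedin X (V n)" for n
    using connectedin_connected_components_of[OF V_comp] by (simp add: connectedin_subtopology)
  show thesis
  proof
    show "decseq V"
      unfolding decseq_Suc_iff
    proof
      fix n
      define s where "s = min (\<tau> n) (\<tau> (Suc n))"
      have "\<alpha> s \<in> V n \<inter> V (Suc n)"
        using tail_V \<tau>(1) unfolding s_def by fastforce
      moreover have "V (Suc n) \<subseteq> W n"
        using V_W W(2) unfolding decseq_Suc_iff by blast
      ultimately show "V (Suc n) \<subseteq> V n"
        using V_conn by (intro connected_components_of_maximal[OF V_comp])
          (auto simp: connectedin_subtopology disjnt_iff)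
    qed
    show "openin X (V n)" for n
      using X W(1)[of n] V_comp[of n] unfolding locally_connected_space_open_connected_components by blast
    show "connectedin X (V n)" "V n \<subseteq> W n" for n
      by (fact V_conn V_W)+
    show "X frontier_of V n \<subseteq> X frontier_of W n" for n
      by (rule frontier_of_connected_components_of_subset[OF X W(1) V_comp])
    show "eventually (\<lambda>t. \<alpha> t \<in> V n) (at 0 within {0<..1})" for n
      unfolding eventually_at_0_within_Ioc using \<tau>(1)[of n] tail_V[of n] by blast
  qed
qed

lemma compactin_frontier_of_Int_open:
  assumes U: "openin S U" "S closure_of U \<subseteq> U \<union> K"
    and N: "openin S N" "K \<subseteq> N" "compactin S (S closure_of N)"
  shows "compactin (subtopology S U) (subtopology S U frontier_of (U \<inter> N))"
proof -
  let ?C = "S closure_of U \<inter> S frontier_of N"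
  have "compactin S ?C"
  proof (rule closed_compactin[OF N(3)])
    show "?C \<subseteq> S closure_of N"
      by (auto simp: frontier_of_def)
    show "closedin S ?C"
      by (intro closedin_Int closedin_closure_of closedin_frontier_of)
  qed
  moreover have "N \<inter> S frontier_of N = {}" "U \<inter> S frontier_of U = {}"
    using N(1) U(1) by (auto simp: frontier_of_def interior_of_openin)
  then have "?C \<subseteq> U"
    using U(2) N(2) by blast
  ultimately have "compactin (subtopology S U) ?C"
    by (simp add: compactin_subtopology)
  moreover have "subtopology S U frontier_of (U \<inter> N) \<subseteq> ?C"
    unfolding frontier_of_subtopology_open[OF U(1)]
    using frontier_of_Int_subset[of S U N] \<open>U \<inter> S frontier_of U = {}\<close>
      closure_of_subset[OF openin_subset[OF U(1)]] by blast
  ultimately show ?thesis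
    using closed_compactin closedin_frontier_of by blast
qed

lemma limitin_imp_not_compactin_closure_of:
  assumes "Hausdorff_space S" "limitin S f p F" "\<not> trivial_limit F"
    and "p \<notin> U" "V \<subseteq> topspace (subtopology S U)" "eventually (\<lambda>t. f t \<in> V) F"
  shows "\<not> compactin (subtopology S U) (subtopology S U closure_of V)"
proof
  assume "compactin (subtopology S U) (subtopology S U closure_of V)"
  then have "closedin S (subtopology S U closure_of V)" "subtopology S U closure_of V \<subseteq> U"
    using assms(1) compactin_imp_closedin by (auto simp: compactin_subtopology)
  moreover have "eventually (\<lambda>t. f t \<in> subtopology S U closure_of V) F"
    using assms(6) by (rule eventually_mono) (use closure_of_subset[OF assms(5)] in blast)
  ultimately show False
    using limitin_closedin[OF assms(2)] assms(3,4) by blast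
qed

lemma limitin_topology_generated_by:
  assumes "x \<in> \<Union>\<S>" "\<And>B. B \<in> \<S> \<Longrightarrow> x \<in> B \<Longrightarrow> eventually (\<lambda>t. f t \<in> B) F"
  shows "limitin (topology_generated_by \<S>) f x F"
  unfolding limitin_def openin_topology_generated_by_iff topology_generated_by_topspace
proof (intro conjI allI impI)
  fix Q assume "generate_topology_on \<S> Q \<and> x \<in> Q"
  then have "generate_topology_on \<S> Q" "x \<in> Q"
    by auto
  then show "eventually (\<lambda>t. f t \<in> Q) F"
  proof (induction rule: generate_topology_on.induct)
    case (Int a b)
    then show ?case
      using eventually_conj by fastforce
  next
    case (UN \<K>)
    then obtain k where "k \<in> \<K>" "x \<in> k"
      by blast
    with UN.IH have "eventually (\<lambda>t. f t \<in> k) F"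
      by blast
    then show ?case
      by (rule eventually_mono) (use \<open>k \<in> \<K>\<close> in blast)
  next
    case (Basis s)
    then show ?case
      by (rule assms(2))
  qed simp
qed (fact assms(1))

definition ideal_point :: "'a topology \<Rightarrow> (nat \<Rightarrow> 'a set) \<Rightarrow> (nat \<Rightarrow> 'a set) set" where
  "ideal_point X V = {W. ideal_bdry_comp X W \<and> ibc_equiv V W}"

lemma ideal_point_in_ideal_boundary:
  "ideal_bdry_comp X V \<Longrightarrow> ideal_point X V \<in> ideal_boundary X"
  unfolding ideal_point_def ideal_boundary_def by blast

lemma mem_ideal_point_self:
  "ideal_bdry_comp X V \<Longrightarrow> V \<in> ideal_point X V"
  unfolding ideal_point_def ibc_equiv_def by blast

lemma limitin_ideal_point:
  assumes V: "ideal_bdry_comp X V" and ev: "\<And>n. eventually (\<lambda>t. f t \<in> V n) F"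
  shows "limitin (ideal_completion X) (Inl \<circ> f) (Inr (ideal_point X V)) F"
  unfolding ideal_completion_def
proof (rule limitin_topology_generated_by)
  have "openin X (V 0)" "connectedin X (V 0)" "compactin X (X frontier_of V 0)" "decseq V"
    using V unfolding ideal_bdry_comp_def by auto
  moreover have "ideal_point X V \<in> ib_points_in X (V 0)"
    using V \<open>decseq V\<close> ideal_point_in_ideal_boundary mem_ideal_point_self
    unfolding ib_points_in_def decseq_def by blast
  ultimately show "Inr (ideal_point X V) \<in> \<Union>{Inl ` A \<union> Inr ` ib_points_in X A | A.
      openin X A \<and> connectedin X A \<and> compactin X (X frontier_of A)}"
    by blast
next
  fix B assume "B \<in> {Inl ` A \<union> Inr ` ib_points_in X A | A.
      openin X A \<and> connectedin X A \<and> compactin X (X frontier_of A)}" "Inr (ideal_point X V) \<in> B"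
  then obtain A where A: "B = Inl ` A \<union> Inr ` ib_points_in X A" "ideal_point X V \<in> ib_points_in X A"
    by blast
  then obtain W n0 where "W \<in> ideal_point X V" "\<forall>n\<ge>n0. W n \<subseteq> A"
    unfolding ib_points_in_def by blast
  moreover obtain m where "V m \<subseteq> W n0"
    using \<open>W \<in> ideal_point X V\<close> unfolding ideal_point_def ibc_equiv_def by blast
  ultimately have "V m \<subseteq> A"
    by blast
  show "eventually (\<lambda>t. (Inl \<circ> f) t \<in> B) F"
    using ev[of m] by (rule eventually_mono) (use \<open>V m \<subseteq> A\<close> A(1) in auto)
qed

lemma ideal_bdry_comp_of_shrinking_neighbourhoods:
  assumes Hausdorff: "Hausdorff_space S"
    and U: "openin S U" "S closure_of U \<subseteq> U \<union> K" "U \<inter> K = {}"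
    and N: "\<And>n. openin S (N n)" "\<And>n. K \<subseteq> N n" "\<And>n. compactin S (S closure_of N n)" "decseq N"
    and N_avoid: "\<And>C. compactin S C \<Longrightarrow> C \<inter> K = {} \<Longrightarrow> \<exists>n. C \<inter> N n = {}"
    and V: "decseq V" "\<And>n. openin (subtopology S U) (V n)" "\<And>n. connectedin (subtopology S U) (V n)"
      "\<And>n. V n \<subseteq> U \<inter> N n"
      "\<And>n. subtopology S U frontier_of V n \<subseteq> subtopology S U frontier_of (U \<inter> N n)"
    and f: "limitin S f p F" "p \<in> K" "\<not> trivial_limit F" "\<And>n. eventually (\<lambda>t. f t \<in> V n) F"
  shows "ideal_bdry_comp (subtopology S U) V"
  unfolding ideal_bdry_comp_def
proof (intro conjI allI impI)
  fix n
  show "V n \<noteq> {}"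
    using eventually_happens'[OF _ f(4)] f(3) by auto
  show "\<not> compactin (subtopology S U) (subtopology S U closure_of V n)"
  proof (rule limitin_imp_not_compactin_closure_of[OF Hausdorff f(1,3) _ _ f(4)])
    show "p \<notin> U"
      using U(3) f(2) by blast
    show "V n \<subseteq> topspace (subtopology S U)"
      using openin_subset[OF V(2)] .
  qed
  have "compactin (subtopology S U) (subtopology S U frontier_of (U \<inter> N n))"
    using U(1,2) N(1-3) by (rule compactin_frontier_of_Int_open)
  then show "compactin (subtopology S U) (subtopology S U frontier_of V n)"
    using V(5) closed_compactin closedin_frontier_of by blast
next
  fix C assume "compactin (subtopology S U) C"
  then have "compactin S C" "C \<inter> K = {}"
    using U(3) unfolding compactin_subtopology by blast+
  then obtain n0 where "C \<inter> N n0 = {}"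
    using N_avoid by blast
  then show "\<exists>n0. \<forall>n\<ge>n0. C \<inter> V n = {}"
    using V(4) decseqD[OF N(4)] by blast
qed (use V in auto)

lemma residual_domain_path_end_ideal_bdry_comp:
  fixes \<alpha> :: "real \<Rightarrow> 'a"
  assumes Hausdorff: "Hausdorff_space S" and countable: "second_countable S"
    and lc: "locally_connected_space S" and lk: "locally_compact_space S"
    and K: "compactin S K" and U: "residual_domain S K U"
    and \<alpha>: "continuous_map (top_of_set {0<..1}) (subtopology S U) \<alpha>"
    and p: "p \<in> K" "limitin S \<alpha> p (at 0 within {0<..1})"
  obtains V where "ideal_bdry_comp (subtopology S U) V" "compactin S (S closure_of V 0)"
    "\<And>n. eventually (\<lambda>t. \<alpha> t \<in> V n) (at 0 within {0<..1})"
proof -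
  have U_comp: "U \<in> connected_components_of (subtopology S (topspace S - K))"
    using U unfolding residual_domain_def .
  have U_open: "openin S U"
    using compactin_imp_closedin[OF Hausdorff K] lc U_comp
    by (meson closedin_def locally_connected_space_open_connected_components)
  have U_K: "U \<inter> K = {}"
    using connected_components_of_subset[OF U_comp] by auto
  obtain N where N: "\<And>n. openin S (N n)" "\<And>n. K \<subseteq> N n" "\<And>n. compactin S (S closure_of N n)" "decseq N"
    and N_avoid: "\<And>C. compactin S C \<Longrightarrow> C \<inter> K = {} \<Longrightarrow> \<exists>n. C \<inter> N n = {}"
    using compactin_decreasing_open_neighbourhoods[OF Hausdorff countable lk K] by metis
  define W where "W n = U \<inter> N n" for n
  have W_open: "openin (subtopology S U) (W n)" for n
    unfolding W_def using N(1) by (rule openin_subtopology_Int2)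
  have "decseq W"
    using N(4) unfolding W_def by (auto simp: decseq_def)
  have ev_W: "eventually (\<lambda>t. \<alpha> t \<in> W n) (at 0 within {0<..1})" for n
  proof -
    have "eventually (\<lambda>t. \<alpha> t \<in> N n) (at 0 within {0<..1})"
      using p N(1,2) unfolding limitin_def by blast
    moreover have "eventually (\<lambda>t. \<alpha> t \<in> U) (at 0 within {0<..1})"
      using continuous_map_image_subset_topspace[OF \<alpha>] unfolding eventually_at_0_within_Ioc
      by (intro bexI[of _ 1]) auto
    ultimately show ?thesis
      unfolding W_def by (auto elim: eventually_elim2)
  qed
  have "locally_connected_space (subtopology S U)"
    using lc U_open by (rule locally_connected_space_open_subset)
  then obtain V where V: "decseq V" "\<And>n. openin (subtopology S U) (V n)"
      "\<And>n. connectedin (subtopology S U) (V n)" "\<And>n. V n \<subseteq> W n"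
      "\<And>n. subtopology S U frontier_of V n \<subseteq> subtopology S U frontier_of W n"
    and ev_V: "\<And>n. eventually (\<lambda>t. \<alpha> t \<in> V n) (at 0 within {0<..1})"
    using path_tail_components[OF _ \<alpha> W_open \<open>decseq W\<close> ev_W] by metis
  have nontriv: "\<not> trivial_limit (at (0::real) within {0<..1})"
    by (simp add: trivial_limit_within)
  show thesis
  proof
    show "ideal_bdry_comp (subtopology S U) V"
      by (rule ideal_bdry_comp_of_shrinking_neighbourhoods[OF Hausdorff U_open
          closure_of_connected_components_of_complement[OF U_comp] U_K N N_avoid V[unfolded W_def]
          p(2,1) nontriv ev_V])
    have "S closure_of V 0 \<subseteq> S closure_of N 0"
      using V(4) unfolding W_def by (intro closure_of_mono) blast
    then show "compactin S (S closure_of V 0)"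
      using N(3) closed_compactin closedin_closure_of by blast
  qed (fact ev_V)
qed

theorem proposition4p2:
  fixes S :: "'a topology" and K U :: "'a set" and \<alpha> :: "real \<Rightarrow> 'a" and p :: 'a
  assumes "surface S" and "connected_space S"
    and "compactin S K" and "connectedin S K"
    and "residual_domain S K U"
    and "continuous_map (top_of_set {0<..1}) (subtopology S U) \<alpha>"
    and "p \<in> K"
    and "limitin S \<alpha> p (at 0 within {0<..1})"
  shows "\<exists>b \<in> ideal_boundary (subtopology S U).
           rel_compact_ibp S U b \<and>
           limitin (ideal_completion (subtopology S U)) (Inl \<circ> \<alpha>) (Inr b) (at 0 within {0<..1})"
proof -
  have "Hausdorff_space S" "second_countable S"
    using \<open>surface S\<close> unfolding surface_def by auto
  then obtain V where V: "ideal_bdry_comp (subtopology S U) V" "compactin S (S closure_of V 0)"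
    and ev: "\<And>n. eventually (\<lambda>t. \<alpha> t \<in> V n) (at 0 within {0<..1})"
    using surface_imp_locally_connected_space[OF \<open>surface S\<close>]
      surface_imp_locally_compact_space[OF \<open>surface S\<close>]
    by (rule residual_domain_path_end_ideal_bdry_comp) (use assms in auto)
  show ?thesis
  proof (intro bexI conjI)
    show "ideal_point (subtopology S U) V \<in> ideal_boundary (subtopology S U)"
      by (rule ideal_point_in_ideal_boundary[OF V(1)])
    show "rel_compact_ibp S U (ideal_point (subtopology S U) V)"
      unfolding rel_compact_ibp_def using mem_ideal_point_self[OF V(1)] V(2) by blast
    show "limitin (ideal_completion (subtopology S U)) (Inl \<circ> \<alpha>)
        (Inr (ideal_point (subtopology S U) V)) (at 0 within {0<..1})"
      by (rule limitin_ideal_point[OF V(1) ev])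
  qed
qed

end
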